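(* Let $A\in\mathbb{R}^{n\times m}$ with $n<m$ have columns $\alpha_1,\dots,\alpha_m$ with $\|\alpha_i\|_2=1$ for all $i$, and let $\mu=\max_{i\neq j}|\langle\alpha_i,\alpha_j\rangle|$ be its coherence, assumed positive. Let $c_{ij}=\langle\alpha_i,\alpha_j\rangle$, $\nu(i)=\max_{j\neq i}\frac{|c_{ij}|}{c_{ii}}$, $\rho(i)=\frac{\nu(i)}{\nu(i)+1}$, and let $l^*$ be the largest integer $l\in\{0,\dots,m\}$ such that the sum of the $l$ largest values among $\rho(1),\dots,\rho(m)$ is $<\frac12$. Then for every integer $k$ with $k<\frac12(1+\mu^{-1})$ we have $\max_{\mathcal{S}\subseteq[m],|\mathcal{S}|=k}\sum_{i\in\mathcal{S}}\rho(i)<\frac12$, and hence $l^*\ge k$.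
   Context: $[m]=\{1,\dots,m\}$. $\langle\cdot,\cdot\rangle$ is the Euclidean inner product. *)

theory Defs
  imports "HOL-Analysis.Analysis"
begin

text \<open>The matrix A in R^(n x m) is given by its columns alpha 1, ..., alpha m,
  each a vector in R^n (type real^'n, n = CARD('n)).\<close>

definition cc :: "(nat \<Rightarrow> 'a::real_inner) \<Rightarrow> nat \<Rightarrow> nat \<Rightarrow> real" where
  "cc \<alpha> i j = \<alpha> i \<bullet> \<alpha> j"

definition coherence :: "nat \<Rightarrow> (nat \<Rightarrow> 'a::real_inner) \<Rightarrow> real" where
  "coherence m \<alpha> = Max {\<bar>cc \<alpha> i j\<bar> | i j. i \<in> {1..m} \<and> j \<in> {1..m} \<and> i \<noteq> j}"

definition nu :: "nat \<Rightarrow> (nat \<Rightarrow> 'a::real_inner) \<Rightarrow> nat \<Rightarrow> real" where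
  "nu m \<alpha> i = Max {\<bar>cc \<alpha> i j\<bar> / cc \<alpha> i i | j. j \<in> {1..m} \<and> j \<noteq> i}"

definition rho :: "nat \<Rightarrow> (nat \<Rightarrow> 'a::real_inner) \<Rightarrow> nat \<Rightarrow> real" where
  "rho m \<alpha> i = nu m \<alpha> i / (nu m \<alpha> i + 1)"

definition sum_largest :: "nat \<Rightarrow> real list \<Rightarrow> real" where
  "sum_largest l xs = sum_list (take l (rev (sort xs)))"

definition lstar :: "nat \<Rightarrow> (nat \<Rightarrow> 'a::real_inner) \<Rightarrow> nat" where
  "lstar m \<alpha> = (GREATEST l. l \<le> m \<and> sum_largest l (map (rho m \<alpha>) [1..<m+1]) < 1/2)"

end

theory Submission
  imports Defs
begin

text \<open>More than \<open>n\<close> unit vectors in \<open>\<real>\<^sup>n\<close> admit a nontrivial vanishing linear combination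
  \<open>\<Sum>\<^sub>j c\<^sub>j \<alpha>\<^sub>j = 0\<close>. Taking the inner product with \<open>\<alpha>\<^sub>i\<close> for an \<open>i\<close> of maximal \<open>\<bar>c\<^sub>i\<bar>\<close> gives
  \<open>\<bar>c\<^sub>i\<bar> \<le> (m - 1) \<mu> \<bar>c\<^sub>i\<bar>\<close>, i.e. \<open>\<mu> \<ge> 1/(m - 1)\<close>; in particular every admissible \<open>k\<close> is
  less than \<open>m\<close>. Since the columns are unit vectors, \<open>\<nu>(i) \<le> \<mu>\<close> and hence
  \<open>\<rho>(i) \<le> \<mu>/(\<mu> + 1)\<close>, so any \<open>k\<close> values of \<open>\<rho>\<close> sum to at most \<open>k \<mu>/(\<mu> + 1)\<close>, which is
  \<open>< 1/2\<close> exactly when \<open>k < (1 + \<mu>\<^sup>-\<^sup>1)/2\<close>.\<close>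

lemma family_dependent_if_card_gt_DIM:
  fixes \<alpha> :: "'i \<Rightarrow> 'a::euclidean_space"
  assumes "finite I" and "DIM('a) < card I"
  shows "\<exists>c. (\<Sum>j\<in>I. c j *\<^sub>R \<alpha> j) = 0 \<and> (\<exists>j\<in>I. c j \<noteq> 0)"
proof (cases "inj_on \<alpha> I")
  case False
  then obtain i j where ij: "i \<in> I" "j \<in> I" "i \<noteq> j" "\<alpha> i = \<alpha> j"
    unfolding inj_on_def by blast
  define c :: "'i \<Rightarrow> real" where "c x = (if x = i then 1 else 0) - (if x = j then 1 else 0)" for x
  have "(\<Sum>x\<in>I. c x *\<^sub>R \<alpha> x)
      = (\<Sum>x\<in>I. if x = i then \<alpha> x else 0) - (\<Sum>x\<in>I. if x = j then \<alpha> x else 0)"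
    unfolding sum_subtractf[symmetric] by (rule sum.cong) (auto simp: c_def)
  also have "\<dots> = 0" using ij assms(1) by simp
  finally have "(\<Sum>x\<in>I. c x *\<^sub>R \<alpha> x) = 0" .
  moreover have "c i \<noteq> 0" using ij(3) by (simp add: c_def)
  ultimately show ?thesis using ij(1) by blast
next
  case True
  have "dependent (\<alpha> ` I)"
    by (rule dependent_biggerset) (use assms True in \<open>simp add: card_image\<close>)
  then obtain u where u: "(\<Sum>v\<in>\<alpha> ` I. u v *\<^sub>R v) = 0" "\<exists>v\<in>\<alpha> ` I. u v \<noteq> 0"
    using dependent_finite[of "\<alpha> ` I"] assms(1) by auto
  have "(\<Sum>j\<in>I. u (\<alpha> j) *\<^sub>R \<alpha> j) = 0"
    using u(1) by (simp add: sum.reindex[OF True])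
  with u(2) show ?thesis by (intro exI[of _ "\<lambda>j. u (\<alpha> j)"]) auto
qed

lemma unit_family_dependence_bound:
  fixes \<alpha> :: "'i \<Rightarrow> 'a::real_inner"
  assumes "finite I"
    and unit: "\<And>i. i \<in> I \<Longrightarrow> norm (\<alpha> i) = 1"
    and bound: "\<And>i j. i \<in> I \<Longrightarrow> j \<in> I \<Longrightarrow> i \<noteq> j \<Longrightarrow> \<bar>\<alpha> i \<bullet> \<alpha> j\<bar> \<le> \<mu>"
    and combination: "(\<Sum>j\<in>I. c j *\<^sub>R \<alpha> j) = 0"
    and nontrivial: "j0 \<in> I" "c j0 \<noteq> 0"
  shows "1 \<le> real (card I - 1) * \<mu>"
proof -
  have "Max ((\<lambda>j. \<bar>c j\<bar>) ` I) \<in> (\<lambda>j. \<bar>c j\<bar>) ` I"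
    using assms(1) nontrivial(1) by (intro Max_in) auto
  then obtain i where i: "i \<in> I" "\<bar>c i\<bar> = Max ((\<lambda>j. \<bar>c j\<bar>) ` I)"
    by auto
  have c_max: "\<bar>c j\<bar> \<le> \<bar>c i\<bar>" if "j \<in> I" for j
    using i(2) assms(1) that by simp
  have c_pos: "\<bar>c i\<bar> > 0"
    using c_max[OF nontrivial(1)] nontrivial(2) by linarith
  have "0 = (\<Sum>j\<in>I. c j *\<^sub>R \<alpha> j) \<bullet> \<alpha> i" using combination by simp
  also have "\<dots> = c i * (\<alpha> i \<bullet> \<alpha> i) + (\<Sum>j\<in>I-{i}. c j * (\<alpha> j \<bullet> \<alpha> i))"
    using i(1) assms(1) by (simp add: inner_sum_left inner_add_left sum.remove)
  also have "\<alpha> i \<bullet> \<alpha> i = 1" using unit[OF i(1)] by (simp add: norm_eq_1[symmetric])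
  finally have "\<bar>c i\<bar> = \<bar>\<Sum>j\<in>I-{i}. c j * (\<alpha> j \<bullet> \<alpha> i)\<bar>" by linarith
  also have "\<dots> \<le> (\<Sum>j\<in>I-{i}. \<bar>c j\<bar> * \<bar>\<alpha> j \<bullet> \<alpha> i\<bar>)"
    unfolding abs_mult[symmetric] by (rule sum_abs)
  also have "\<dots> \<le> (\<Sum>j\<in>I-{i}. \<bar>c i\<bar> * \<mu>)"
    using c_max bound i(1) by (intro sum_mono mult_mono) auto
  also have "\<dots> = \<bar>c i\<bar> * (real (card I - 1) * \<mu>)"
    using i(1) assms(1) by simp
  finally have "\<bar>c i\<bar> * 1 \<le> \<bar>c i\<bar> * (real (card I - 1) * \<mu>)" by simp
  then show ?thesis using c_pos by (simp only: mult_le_cancel_left_pos)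
qed

lemma coherence_bound_of_card_gt_DIM:
  fixes \<alpha> :: "'i \<Rightarrow> 'a::euclidean_space"
  assumes "finite I" and "DIM('a) < card I"
    and "\<And>i. i \<in> I \<Longrightarrow> norm (\<alpha> i) = 1"
    and "\<And>i j. i \<in> I \<Longrightarrow> j \<in> I \<Longrightarrow> i \<noteq> j \<Longrightarrow> \<bar>\<alpha> i \<bullet> \<alpha> j\<bar> \<le> \<mu>"
  shows "1 \<le> real (card I - 1) * \<mu>"
proof -
  obtain c j0 where "(\<Sum>j\<in>I. c j *\<^sub>R \<alpha> j) = 0" "j0 \<in> I" "c j0 \<noteq> 0"
    using family_dependent_if_card_gt_DIM[OF assms(1,2), of \<alpha>] by blast
  then show ?thesis using unit_family_dependence_bound[of I \<alpha> \<mu> c j0] assms by blast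
qed

lemma abs_cc_le_coherence:
  assumes "i \<in> {1..m}" "j \<in> {1..m}" "i \<noteq> j"
  shows "\<bar>cc \<alpha> i j\<bar> \<le> coherence m \<alpha>"
proof -
  have "finite {\<bar>cc \<alpha> i j\<bar> | i j. i \<in> {1..m} \<and> j \<in> {1..m} \<and> i \<noteq> j}"
    by (rule finite_subset[of _ "(\<lambda>(i, j). \<bar>cc \<alpha> i j\<bar>) ` ({1..m} \<times> {1..m})"]) auto
  then show ?thesis
    unfolding coherence_def using assms by (intro Max_ge) auto
qed

lemma
  assumes "i \<in> {1..m}" and "2 \<le> m"
  shows nu_nonneg: "0 \<le> nu m \<alpha> i"
    and nu_le_coherence: "norm (\<alpha> i) = 1 \<Longrightarrow> nu m \<alpha> i \<le> coherence m \<alpha>"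
proof -
  let ?N = "{\<bar>cc \<alpha> i j\<bar> / cc \<alpha> i i | j. j \<in> {1..m} \<and> j \<noteq> i}"
  have finite: "finite ?N"
    by (rule finite_subset[of _ "(\<lambda>j. \<bar>cc \<alpha> i j\<bar> / cc \<alpha> i i) ` {1..m}"]) auto
  obtain j where j: "j \<in> {1..m}" "j \<noteq> i"
    using assms by (cases "i = 1") (auto intro: that[of 1] that[of 2])
  have "0 \<le> \<bar>cc \<alpha> i j\<bar> / cc \<alpha> i i" by (simp add: cc_def)
  also have "\<dots> \<le> nu m \<alpha> i"
    unfolding nu_def using finite j by (intro Max_ge) auto
  finally show "0 \<le> nu m \<alpha> i" .
  assume "norm (\<alpha> i) = 1"
  then have "cc \<alpha> i i = 1" by (simp add: cc_def norm_eq_1[symmetric])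
  then show "nu m \<alpha> i \<le> coherence m \<alpha>"
    unfolding nu_def using finite j assms(1) abs_cc_le_coherence
    by (subst Max_le_iff) auto
qed

lemma rho_le_coherence_ratio:
  assumes "i \<in> {1..m}" and "2 \<le> m" and "norm (\<alpha> i) = 1"
  shows "rho m \<alpha> i \<le> coherence m \<alpha> / (coherence m \<alpha> + 1)"
proof -
  have "0 \<le> nu m \<alpha> i" and "nu m \<alpha> i \<le> coherence m \<alpha>"
    using nu_nonneg[of i m \<alpha>] nu_le_coherence[of i m \<alpha>] assms by simp_all
  then show ?thesis unfolding rho_def by (simp add: field_simps)
qed

lemma Max_subset_sum_less:
  fixes f :: "'i \<Rightarrow> real"
  assumes "finite A" and "k \<le> card A"
    and "\<And>i. i \<in> A \<Longrightarrow> f i \<le> r" and "real k * r < b"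
  shows "Max {sum f S | S. S \<subseteq> A \<and> card S = k} < b"
proof -
  let ?F = "{sum f S | S. S \<subseteq> A \<and> card S = k}"
  obtain T where "T \<subseteq> A" "card T = k"
    using obtain_subset_with_card_n[OF assms(2)] by blast
  then have "?F \<noteq> {}" by blast
  moreover have "finite ?F"
    by (rule finite_subset[of _ "sum f ` Pow A"]) (auto simp: assms(1))
  moreover have "sum f S < b" if "S \<subseteq> A" "card S = k" for S
  proof -
    have "sum f S \<le> real (card S) * r"
      using assms(3) that(1) by (intro sum_bounded_above) auto
    then show ?thesis using that(2) assms(4) by simp
  qed
  ultimately show ?thesis by (auto simp: Max_less_iff)
qed

lemma sum_largest_le:
  assumes "\<And>x. x \<in> set xs \<Longrightarrow> x \<le> r" and "0 \<le> r"
  shows "sum_largest l xs \<le> real l * r"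
proof -
  let ?ys = "take l (rev (sort xs))"
  have "(\<Sum>x\<leftarrow>?ys. x) \<le> (\<Sum>x\<leftarrow>?ys. r)"
    by (rule sum_list_mono) (metis assms(1) in_set_takeD set_rev set_sort)
  also have "\<dots> = real (length ?ys) * r" by (simp add: sum_list_triv)
  also have "\<dots> \<le> real l * r" using assms(2) by (intro mult_right_mono) auto
  finally show ?thesis unfolding sum_largest_def by simp
qed

lemma coherence_lower_bound:
  fixes \<alpha> :: "nat \<Rightarrow> 'a::euclidean_space"
  assumes "DIM('a) < m" and "\<forall>i\<in>{1..m}. norm (\<alpha> i) = 1"
  shows "1 \<le> real (m - 1) * coherence m \<alpha>"
proof -
  have "\<bar>\<alpha> i \<bullet> \<alpha> j\<bar> \<le> coherence m \<alpha>" if "i \<in> {1..m}" "j \<in> {1..m}" "i \<noteq> j" for i j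
    using abs_cc_le_coherence[OF that] by (simp add: cc_def)
  then show ?thesis
    using coherence_bound_of_card_gt_DIM[of "{1..m}" \<alpha>] assms by simp
qed

lemma less_of_inverse_bound:
  fixes \<mu> :: real
  assumes "0 < \<mu>" and "1 \<le> real (m - 1) * \<mu>" and "real k < (1 + 1 / \<mu>) / 2"
  shows "k < m"
proof -
  have "1 + \<mu> \<le> \<mu> * real m"
    using assms(2) by (cases m) (auto simp: algebra_simps)
  moreover have "\<mu> * (2 * real k) < 1 + \<mu>"
    using assms(1,3) by (simp add: field_simps)
  ultimately have "\<mu> * (2 * real k) < \<mu> * real m" by linarith
  then show ?thesis using assms(1) by simp
qed

lemma mult_ratio_less_half:
  fixes \<mu> :: real
  assumes "0 < \<mu>" and "x < (1 + 1 / \<mu>) / 2"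
  shows "x * (\<mu> / (\<mu> + 1)) < 1/2"
  using assms by (simp add: field_simps)

theorem mainTheorem4:
  fixes \<alpha> :: "nat \<Rightarrow> real^'n" and m k :: nat
  assumes "CARD('n) < m"
    and "\<forall>i\<in>{1..m}. norm (\<alpha> i) = 1"
    and "coherence m \<alpha> > 0"
    and "real k < (1 + 1 / coherence m \<alpha>) / 2"
  shows "Max {(\<Sum>i\<in>S. rho m \<alpha> i) | S. S \<subseteq> {1..m} \<and> card S = k} < 1/2
         \<and> k \<le> lstar m \<alpha>"
proof -
  define r where "r = coherence m \<alpha> / (coherence m \<alpha> + 1)"
  have "k < m"
    using less_of_inverse_bound coherence_lower_bound[of m \<alpha>] assms by simp
  have "0 < CARD('n)" by simp
  with assms(1) have "2 \<le> m" by linarith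
  have kr: "real k * r < 1/2"
    using mult_ratio_less_half assms(3,4) unfolding r_def by blast
  have rho_le: "rho m \<alpha> i \<le> r" if "i \<in> {1..m}" for i
    using rho_le_coherence_ratio[of i m \<alpha>] that \<open>2 \<le> m\<close> assms(2) by (simp add: r_def)
  have "Max {(\<Sum>i\<in>S. rho m \<alpha> i) | S. S \<subseteq> {1..m} \<and> card S = k} < 1/2"
    using \<open>k < m\<close> rho_le kr by (intro Max_subset_sum_less) auto
  moreover have "k \<le> lstar m \<alpha>"
  proof -
    have "sum_largest k (map (rho m \<alpha>) [1..<m+1]) \<le> real k * r"
      using rho_le assms(3) by (intro sum_largest_le) (auto simp: r_def)
    with kr \<open>k < m\<close> show ?thesis
      unfolding lstar_def by (intro Greatest_le_nat[where b = m]) auto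
  qed
  ultimately show ?thesis ..
qed

end
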